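(* Let Assumptions 1 and 2 (stated in the context) hold. Then there exist constants $c_\tau>0$ and $0<C_\tau<\infty$ depending only on $\zeta=(c_f,c_W,C_F,C_T,w_1,w_2,x_1,x_2,\tilde x_1,\tilde x_2)$ such that $\tau(a)\le C_\tau$ for all $a\le c_\tau$.
   Context: Let $(X,W)$ be a random pair with values in $[0,1]^2$; $F_{X|W}(x|w)$, $f_{X|W}(x|w)$, $f_{X,W}$, $f_W$ denote the conditional distribution function of $X$ given $W=w$, the conditional density, the joint density and the marginal density of $W$. Fix constants $0\le x_1<\tilde x_1<\tilde x_2<x_2\le1$ and $0<w_1<w_2<1$. "Increasing" means non-decreasing and "decreasing" means non-increasing. Assumption 1 (Monotone IV): (a) for all $x,w',w''\in(0,1)$ with $w'\le w''$, $F_{X|W}(x|w')\ge F_{X|W}(x|w'')$; (b) there is a constant $C_F>1$ such that $F_{X|W}(x|w_1)\ge C_F F_{X|W}(x|w_2)$ for all $x\in(0,x_2)$, and $C_F(1-F_{X|W}(x|w_1))\le 1-F_{X|W}(x|w_2)$ for all $x\in(x_1,1)$. Assumption 2 (Density): (i) $(X,W)$ has a density $f_{X,W}$ with respect to Lebesgue measure on $[0,1]^2$ with $\int_0^1\int_0^1 f_{X,W}(x,w)^2\,dx\,dw\le C_T$ for a finite constant $C_T$; (ii) there is $c_f>0$ with $f_{X|W}(x|w)\ge c_f$ for all $x\in[x_1,x_2]$ and $w\in\{w_1,w_2\}$; (iii) there are constants $0<c_W\le C_W<\infty$ with $c_W\le f_W(w)\le C_W$ for all $w\in[0,1]$. The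 operator $T:L^2[0,1]\to L^2[0,1]$ is $(Th)(w)=E[h(X)\mid W=w]f_W(w)=\int_0^1 h(x)f_{X,W}(x,w)\,dx$. The truncated norm is $\|h\|_{2,t}=\big(\int_{\tilde x_1}^{\tilde x_2}h(x)^2dx\big)^{1/2}$. For $a\in\mathbb R$, $\mathcal H(a)=\{h\in L^2[0,1]:\ \inf_{0\le x'<x''\le1}\frac{h(x'')-h(x')}{x''-x'}\ge -a\}$, and the restricted measure of ill-posedness is $\tau(a)=\sup\{\|h\|_{2,t}/\|Th\|_2:\ h\in\mathcal H(a),\ \|h\|_{2,t}=1\}$. *)

theory Defs
  imports "HOL-Analysis.Analysis"
begin

text \<open>The joint density of (X,W) is represented by f :: real => real => real,
  with f x w the density at (x,w); only its values on [0,1]^2 matter.\<close>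

definition fW :: "(real \<Rightarrow> real \<Rightarrow> real) \<Rightarrow> real \<Rightarrow> real" where
  "fW f w = (LINT x:{0..1}|lborel. f x w)"

definition condCDF :: "(real \<Rightarrow> real \<Rightarrow> real) \<Rightarrow> real \<Rightarrow> real \<Rightarrow> real" where
  "condCDF f x w = (LINT t:{0..x}|lborel. f t w) / fW f w"

definition condDens :: "(real \<Rightarrow> real \<Rightarrow> real) \<Rightarrow> real \<Rightarrow> real \<Rightarrow> real" where
  "condDens f x w = f x w / fW f w"

definition L2 :: "(real \<Rightarrow> real) \<Rightarrow> bool" where
  "L2 h \<longleftrightarrow> set_borel_measurable lborel {0..1} h \<and>
            set_integrable lborel {0..1} (\<lambda>x. (h x)^2)"

definition Top :: "(real \<Rightarrow> real \<Rightarrow> real) \<Rightarrow> (real \<Rightarrow> real) \<Rightarrow> real \<Rightarrow> real" where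
  "Top f h w = (LINT x:{0..1}|lborel. h x * f x w)"

definition L2norm :: "(real \<Rightarrow> real) \<Rightarrow> real" where
  "L2norm g = sqrt (LINT x:{0..1}|lborel. (g x)^2)"

definition trunc_norm :: "real \<Rightarrow> real \<Rightarrow> (real \<Rightarrow> real) \<Rightarrow> real" where
  "trunc_norm xt1 xt2 h = sqrt (LINT x:{xt1..xt2}|lborel. (h x)^2)"

definition Hclass :: "real \<Rightarrow> (real \<Rightarrow> real) set" where
  "Hclass a = {h. L2 h \<and>
     (\<forall>x' x''. 0 \<le> x' \<and> x' < x'' \<and> x'' \<le> 1 \<longrightarrow> (h x'' - h x') / (x'' - x') \<ge> - a)}"

definition tau :: "real \<Rightarrow> real \<Rightarrow> (real \<Rightarrow> real \<Rightarrow> real) \<Rightarrow> real \<Rightarrow> ereal" where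
  "tau xt1 xt2 f a = Sup ((\<lambda>h. if L2norm (Top f h) = 0 then \<infinity>
        else ereal (trunc_norm xt1 xt2 h / L2norm (Top f h)))
     ` {h \<in> Hclass a. trunc_norm xt1 xt2 h = 1})"

end

theory Submission
  imports Defs
begin

text \<open>For \<open>h \<in> H(a)\<close> and \<open>b = max a 0\<close>, \<open>\<phi>(x) = h(x) + b x\<close> is increasing and
  \<open>(T h)(w) = f\<^sub>W(w) (E[\<phi>(X) | W = w] - b E[X | W = w])\<close>. Monotonicity and \<open>\<parallel>h\<parallel>\<^sub>2\<^sub>,\<^sub>t = 1\<close>
  force \<open>|\<phi>|\<close> to be at least \<open>(xt2 - xt1)\<^sup>-\<^sup>1\<^sup>/\<^sup>2 - b\<close> at \<open>xt1\<close> or \<open>xt2\<close>. Writing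
  \<open>E[\<phi>(X) | W = w]\<close> by the layer-cake formula as an integral of superlevel probabilities
  \<open>P(\<phi>(X) > t | W = w)\<close>, the quantitative dominance of Assumption 1(b) together with the density
  lower bound makes \<open>E[\<phi>(X) | W = w\<^sub>2]\<close> large or \<open>E[\<phi>(X) | W = w\<^sub>1]\<close> very negative; by
  Assumption 1(a) the same holds for all \<open>w > w\<^sub>2\<close> resp. \<open>w < w\<^sub>1\<close>. For small \<open>a\<close> the
  correction \<open>b E[X | W]\<close> cannot cancel this, which bounds \<open>\<parallel>T h\<parallel>\<^sub>2\<close> from below.\<close>

lemma set_integral_indicator_subset:
  fixes A I :: "real set"
  assumes "I \<subseteq> A" "I \<in> sets lborel" "emeasure lborel I < \<infinity>"
  shows set_integrable_indicator_subset: "set_integrable lborel A (indicator I :: real \<Rightarrow> real)"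
    and "(LINT t:A|lborel. indicator I t) = measure lborel I"
proof -
  have eq: "(\<lambda>t. indicator A t *\<^sub>R indicator I t) = (indicator I :: real \<Rightarrow> real)"
    using assms(1) by (auto simp: fun_eq_iff split: split_indicator)
  have "integrable lborel (indicator I :: real \<Rightarrow> real)"
    using assms(2,3) by (simp add: integrable_indicator_iff)
  then show "set_integrable lborel A (indicator I :: real \<Rightarrow> real)"
    unfolding set_integrable_def eq .
  show "(LINT t:A|lborel. indicator I t) = measure lborel I"
    using assms(2,3) unfolding set_lebesgue_integral_def eq by simp
qed

lemma set_integral_Icc_ge_const:
  fixes q :: "real \<Rightarrow> real"
  assumes "a \<le> b" "set_integrable lborel {a..b} q" "\<And>x. x \<in> {a..b} \<Longrightarrow> c \<le> q x"
  shows "c * (b - a) \<le> (LINT x:{a..b}|lborel. q x)"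
proof -
  have "(LINT x:{a..b}|lborel. c) \<le> (LINT x:{a..b}|lborel. q x)"
  proof (rule set_integral_mono)
    show "set_integrable lborel {a..b} (\<lambda>x. c)"
      unfolding set_integrable_def using assms(1)
      by (intro integrable_scaleR_left) (simp add: integrable_indicator_iff)
  qed (use assms in auto)
  then show ?thesis
    using assms(1) by (simp add: set_integral_const mult.commute)
qed

lemma set_integrable_mult_bounded:
  fixes g q :: "real \<Rightarrow> real"
  assumes "set_integrable lborel A q" and [measurable]: "A \<in> sets borel"
    and [measurable]: "q \<in> borel_measurable borel" "g \<in> borel_measurable borel"
    and bound: "\<And>x. x \<in> A \<Longrightarrow> \<bar>g x\<bar> \<le> B"
  shows "set_integrable lborel A (\<lambda>x. g x * q x)"
proof (rule set_integrable_bound[OF set_integrable_mult_right[OF assms(1), of B]])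
  show "set_borel_measurable lborel A (\<lambda>x. g x * q x)"
    unfolding set_borel_measurable_def by measurable
  show "AE x in lborel. x \<in> A \<longrightarrow> norm (g x * q x) \<le> norm (B * q x)"
    using bound by (intro AE_I2 impI) (force simp: abs_mult intro: mult_right_mono)
qed

definition superlevel_mass :: "(real \<Rightarrow> real) \<Rightarrow> (real \<Rightarrow> real) \<Rightarrow> real \<Rightarrow> real" where
  "superlevel_mass \<phi> q t = (LINT x:{0..1}|lborel. (if t < \<phi> x then q x else 0))"

lemma integrable_layer_cake_region:
  fixes \<phi> q :: "real \<Rightarrow> real"
  assumes mono: "mono \<phi>" and [measurable]: "q \<in> borel_measurable borel"
    and qi: "set_integrable lborel {0..1} q" and q0: "\<And>x. x \<in> {0..1} \<Longrightarrow> 0 \<le> q x"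
    and L: "L \<le> \<phi> 0" and U: "\<phi> 1 \<le> U"
  defines "F \<equiv> \<lambda>x t. indicator {0..1} x * indicator {L..U} t * (if t < \<phi> x then q x else 0 :: real)"
  shows "integrable (lborel \<Otimes>\<^sub>M lborel) (case_prod F)"
    and "\<And>x. (\<integral>t. F x t \<partial>lborel) = indicator {0..1} x * ((\<phi> x - L) * q x)"
proof -
  have [measurable]: "\<phi> \<in> borel_measurable borel" using borel_measurable_mono[OF mono] .
  have range: "L \<le> \<phi> x" "\<phi> x \<le> U" if "x \<in> {0..1}" for x
    using that monoD[OF mono, of 0 x] monoD[OF mono, of x 1] L U by auto
  show inner: "(\<integral>t. F x t \<partial>lborel) = indicator {0..1} x * ((\<phi> x - L) * q x)" for x
  proof (cases "x \<in> {0..1}")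
    case True
    then have "(\<lambda>t. F x t) = (\<lambda>t. q x * indicator {L..<\<phi> x} t)"
      using range[OF True] by (auto simp: F_def fun_eq_iff split: split_indicator)
    then show ?thesis using True range[OF True] by simp
  qed (simp add: F_def)
  show "integrable (lborel \<Otimes>\<^sub>M lborel) (case_prod F)"
  proof (rule lborel_pair.Fubini_integrable)
    show "case_prod F \<in> borel_measurable (lborel \<Otimes>\<^sub>M lborel)"
      unfolding F_def by measurable
    have "set_integrable lborel {0..1} (\<lambda>x. (\<phi> x - L) * q x)"
      using range by (intro set_integrable_mult_bounded[OF qi, of _ "\<bar>L\<bar> + \<bar>U\<bar>"]) force+
    moreover have "(\<lambda>x. \<integral>t. norm (case_prod F (x, t)) \<partial>lborel) = (\<lambda>x. \<integral>t. F x t \<partial>lborel)"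
      using q0 by (auto simp: F_def intro!: ext Bochner_Integration.integral_cong split: split_indicator)
    ultimately show "integrable lborel (\<lambda>x. \<integral>t. norm (case_prod F (x, t)) \<partial>lborel)"
      by (simp add: inner set_integrable_def)
    show "AE x in lborel. integrable lborel (\<lambda>t. case_prod F (x, t))"
    proof (rule AE_I2)
      fix x
      show "integrable lborel (\<lambda>t. case_prod F (x, t))"
      proof (rule Bochner_Integration.integrable_bound[of _ "\<lambda>t. \<bar>q x\<bar> * indicator {L..U} t"])
        show "integrable lborel (\<lambda>t. \<bar>q x\<bar> * indicator {L..U} t)"
          by (intro integrable_mult_right) (cases "L \<le> U"; simp add: integrable_indicator_iff)
      qed (auto simp: F_def split: split_indicator)
    qed
  qed
qed

lemma layer_cake:
  fixes \<phi> q :: "real \<Rightarrow> real"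
  assumes mono: "mono \<phi>" and [measurable]: "q \<in> borel_measurable borel"
    and qi: "set_integrable lborel {0..1} q" and q0: "\<And>x. x \<in> {0..1} \<Longrightarrow> 0 \<le> q x"
    and L: "L \<le> \<phi> 0" and U: "\<phi> 1 \<le> U"
  shows set_integrable_superlevel_mass: "set_integrable lborel {L..U} (superlevel_mass \<phi> q)"
    and "(LINT x:{0..1}|lborel. \<phi> x * q x)
           = L * (LINT x:{0..1}|lborel. q x) + (LINT t:{L..U}|lborel. superlevel_mass \<phi> q t)"
proof -
  define F where "F = (\<lambda>x t. indicator {0..1} x * indicator {L..U} t * (if t < \<phi> x then q x else 0 :: real))"
  note region = integrable_layer_cake_region[OF assms, folded F_def]
  have inner_t: "(\<integral>t. F x t \<partial>lborel) = indicator {0..1} x * ((\<phi> x - L) * q x)" for x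
    using region(2) by (simp add: F_def)
  have [measurable]: "\<phi> \<in> borel_measurable borel" using borel_measurable_mono[OF mono] .
  have inner_x: "(\<integral>x. F x t \<partial>lborel) = indicator {L..U} t * superlevel_mass \<phi> q t" for t
    unfolding F_def superlevel_mass_def set_lebesgue_integral_def
    by (subst integral_mult_right_zero[symmetric]) (simp add: mult_ac)
  from lborel_pair.integrable_snd[OF region(1)]
  show "set_integrable lborel {L..U} (superlevel_mass \<phi> q)"
    unfolding inner_x set_integrable_def by simp
  have phi_q: "set_integrable lborel {0..1} (\<lambda>x. \<phi> x * q x)"
    using monoD[OF mono, of 0] monoD[OF mono, of _ 1]
    by (intro set_integrable_mult_bounded[OF qi, of _ "\<bar>\<phi> 0\<bar> + \<bar>\<phi> 1\<bar>"]) force+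
  have "(LINT t:{L..U}|lborel. superlevel_mass \<phi> q t) = (LINT x:{0..1}|lborel. (\<phi> x - L) * q x)"
    using lborel_pair.Fubini_integral[OF region(1)]
    by (simp add: inner_x inner_t set_lebesgue_integral_def)
  also have "\<dots> = (LINT x:{0..1}|lborel. \<phi> x * q x) - L * (LINT x:{0..1}|lborel. q x)"
    using phi_q qi by (simp add: left_diff_distrib set_integral_diff)
  finally show "(LINT x:{0..1}|lborel. \<phi> x * q x)
      = L * (LINT x:{0..1}|lborel. q x) + (LINT t:{L..U}|lborel. superlevel_mass \<phi> q t)"
    by simp
qed

text \<open>For monotone \<open>\<phi>\<close> the set \<open>{x \<in> {0..1}. t < \<phi> x}\<close> is an interval ending at 1;
  \<open>level_cut \<phi> t\<close> is its left endpoint (1 if the set is empty).\<close>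
definition level_cut :: "(real \<Rightarrow> real) \<Rightarrow> real \<Rightarrow> real" where
  "level_cut \<phi> t = (if {x\<in>{0..1}. t < \<phi> x} = {} then 1 else Inf {x\<in>{0..1}. t < \<phi> x})"

lemma level_cut:
  fixes \<phi> :: "real \<Rightarrow> real"
  assumes mono: "mono \<phi>"
  shows level_cut_in_unit: "level_cut \<phi> t \<in> {0..1}"
    and le_below_level_cut: "\<And>x. x \<in> {0..1} \<Longrightarrow> x < level_cut \<phi> t \<Longrightarrow> \<phi> x \<le> t"
    and gt_above_level_cut: "\<And>x. x \<in> {0..1} \<Longrightarrow> level_cut \<phi> t < x \<Longrightarrow> t < \<phi> x"
proof -
  define S where "S = {x\<in>{0..1}. t < \<phi> x}"
  have "level_cut \<phi> t \<in> {0..1} \<and> (\<forall>x\<in>{0..1}. x < level_cut \<phi> t \<longrightarrow> \<phi> x \<le> t)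
        \<and> (\<forall>x\<in>{0..1}. level_cut \<phi> t < x \<longrightarrow> t < \<phi> x)"
  proof (cases "S = {}")
    case True
    then have "level_cut \<phi> t = 1" unfolding level_cut_def S_def[symmetric] by simp
    then show ?thesis using True by (auto simp: S_def not_less)
  next
    case False
    have cut: "level_cut \<phi> t = Inf S" using False unfolding level_cut_def S_def[symmetric] by simp
    have bdd: "bdd_below S" unfolding S_def by (rule bdd_belowI[of _ 0]) auto
    have "Inf S \<ge> 0" using False by (intro cInf_greatest) (auto simp: S_def)
    moreover obtain y where "y \<in> S" using False by auto
    then have "Inf S \<le> 1" using cInf_lower[OF _ bdd] by (fastforce simp: S_def)
    moreover have "\<phi> x \<le> t" if "x \<in> {0..1}" "x < Inf S" for x
      using cInf_lower[of x S] bdd that by (force simp: S_def not_less)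
    moreover have "t < \<phi> x" if "x \<in> {0..1}" "Inf S < x" for x
    proof -
      obtain z where "z \<in> S" "z < x" using cInf_lessD[OF False \<open>Inf S < x\<close>] by auto
      then show ?thesis using monoD[OF mono, of z x] by (auto simp: S_def)
    qed
    ultimately show ?thesis unfolding cut by auto
  qed
  then show "level_cut \<phi> t \<in> {0..1}"
    "\<And>x. x \<in> {0..1} \<Longrightarrow> x < level_cut \<phi> t \<Longrightarrow> \<phi> x \<le> t"
    "\<And>x. x \<in> {0..1} \<Longrightarrow> level_cut \<phi> t < x \<Longrightarrow> t < \<phi> x"
    by auto
qed

definition cdf :: "(real \<Rightarrow> real) \<Rightarrow> real \<Rightarrow> real" where
  "cdf q s = (LINT x:{0..s}|lborel. q x)"

definition expect :: "(real \<Rightarrow> real) \<Rightarrow> (real \<Rightarrow> real) \<Rightarrow> real" where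
  "expect q \<phi> = (LINT x:{0..1}|lborel. \<phi> x * q x)"

locale density =
  fixes q :: "real \<Rightarrow> real"
  assumes q_measurable[measurable]: "q \<in> borel_measurable borel"
    and q_integrable: "set_integrable lborel {0..1} q"
    and q_nonneg: "\<And>x. x \<in> {0..1} \<Longrightarrow> 0 \<le> q x"
    and q_total: "(LINT x:{0..1}|lborel. q x) = 1"
begin

lemma cdf_0: "cdf q 0 = 0"
  unfolding cdf_def set_lebesgue_integral_def
  by (rule integral_eq_zero_AE) (auto intro: eventually_mono[OF AE_lborel_singleton[of 0]])

lemma cdf_add_tail:
  assumes "s \<in> {0..1}"
  shows "cdf q s + (LINT x:{s<..1}|lborel. q x) = 1"
proof -
  have "{0..1} = {0..s} \<union> {s<..1}" using assms by auto
  moreover have "set_integrable lborel {0..s} q" "set_integrable lborel {s<..1} q"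
    using assms by (auto intro!: set_integrable_subset[OF q_integrable])
  ultimately show ?thesis
    using set_integral_Un[of "{0..s}" "{s<..1}" lborel q] q_total by (simp add: cdf_def ivl_disj_int)
qed

lemma set_integral_nonneg_subset:
  assumes "A \<subseteq> {0..1}"
  shows "0 \<le> (LINT x:A|lborel. q x)"
  unfolding set_lebesgue_integral_def
  using assms by (intro Bochner_Integration.integral_nonneg) (auto simp: q_nonneg split: split_indicator)

lemma cdf_bounds:
  assumes "s \<in> {0..1}"
  shows "0 \<le> cdf q s" "cdf q s \<le> 1"
  using cdf_add_tail[OF assms] set_integral_nonneg_subset[of "{0..s}"] set_integral_nonneg_subset[of "{s<..1}"] assms
  by (auto simp: cdf_def subset_iff)

lemma cdf_1: "cdf q 1 = 1"
  using cdf_add_tail[of 1] by (simp add: set_lebesgue_integral_def)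

lemma superlevel_mass_eq_cdf:
  assumes mono: "mono \<phi>"
  shows "superlevel_mass \<phi> q t = 1 - cdf q (level_cut \<phi> t)"
proof -
  define s where "s = level_cut \<phi> t"
  have s: "s \<in> {0..1}" using level_cut_in_unit[OF mono] by (simp add: s_def)
  have [measurable]: "\<phi> \<in> borel_measurable borel" using borel_measurable_mono[OF mono] .
  have "superlevel_mass \<phi> q t = (LINT x:{s<..1}|lborel. q x)"
    unfolding superlevel_mass_def set_lebesgue_integral_def
  proof (rule integral_cong_AE)
    show "AE x in lborel. indicator {0..1} x *\<^sub>R (if t < \<phi> x then q x else 0) = indicator {s<..1} x *\<^sub>R q x"
      using AE_lborel_singleton[of s]
    proof eventually_elim
      case (elim x)
      show ?case
      proof (cases "x \<in> {0..1}")
        case True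
        then show ?thesis
          using le_below_level_cut[OF mono True, of t] gt_above_level_cut[OF mono True, of t] elim s
          by (cases "x < s") (auto simp: s_def split: split_indicator)
      qed (use s in \<open>auto split: split_indicator\<close>)
    qed
  qed measurable
  then show ?thesis
    using cdf_add_tail[OF s] by (simp add: s_def)
qed

lemma superlevel_mass_bounds:
  assumes "mono \<phi>"
  shows "0 \<le> superlevel_mass \<phi> q t" "superlevel_mass \<phi> q t \<le> 1"
  using cdf_bounds[OF level_cut_in_unit[OF assms]] by (auto simp: superlevel_mass_eq_cdf[OF assms])

lemma superlevel_mass_ge:
  assumes mono: "mono \<phi>" and ab: "0 \<le> a" "b \<le> 1" and gt: "\<And>x. x \<in> {a..b} \<Longrightarrow> t < \<phi> x"
  shows "(LINT x:{a..b}|lborel. q x) \<le> superlevel_mass \<phi> q t"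
proof -
  have [measurable]: "\<phi> \<in> borel_measurable borel" using borel_measurable_mono[OF mono] .
  have "(LINT x:{a..b}|lborel. q x) = (LINT x:{0..1}|lborel. indicator {a..b} x * q x)"
    using ab unfolding set_lebesgue_integral_def
    by (intro Bochner_Integration.integral_cong) (auto split: split_indicator)
  also have "\<dots> \<le> superlevel_mass \<phi> q t"
    unfolding superlevel_mass_def
  proof (rule set_integral_mono)
    show "set_integrable lborel {0..1} (\<lambda>x. indicator {a..b} x * q x)"
      using q_integrable unfolding set_integrable_def
      by (rule Bochner_Integration.integrable_bound) (auto split: split_indicator)
    show "set_integrable lborel {0..1} (\<lambda>x. if t < \<phi> x then q x else 0)"
      using q_integrable unfolding set_integrable_def
      by (rule Bochner_Integration.integrable_bound) (auto split: split_indicator)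
  qed (use gt q_nonneg in \<open>auto split: split_indicator\<close>)
  finally show ?thesis .
qed

lemma superlevel_mass_le:
  assumes mono: "mono \<phi>" and ab: "0 \<le> a" "b \<le> 1" and le: "\<And>x. x \<in> {a..b} \<Longrightarrow> \<phi> x \<le> t"
  shows "superlevel_mass \<phi> q t \<le> 1 - (LINT x:{a..b}|lborel. q x)"
proof -
  have [measurable]: "\<phi> \<in> borel_measurable borel" using borel_measurable_mono[OF mono] .
  have upper: "set_integrable lborel {0..1} (\<lambda>x. if t < \<phi> x then q x else 0)"
    using q_integrable unfolding set_integrable_def
    by (rule Bochner_Integration.integrable_bound) (auto split: split_indicator)
  have "(LINT x:{a..b}|lborel. q x) = (LINT x:{0..1}|lborel. indicator {a..b} x * q x)"
    using ab unfolding set_lebesgue_integral_def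
    by (intro Bochner_Integration.integral_cong) (auto split: split_indicator)
  also have "\<dots> \<le> (LINT x:{0..1}|lborel. q x - (if t < \<phi> x then q x else 0))"
  proof (rule set_integral_mono)
    show "set_integrable lborel {0..1} (\<lambda>x. indicator {a..b} x * q x)"
      using q_integrable unfolding set_integrable_def
      by (rule Bochner_Integration.integrable_bound) (auto split: split_indicator)
    show "set_integrable lborel {0..1} (\<lambda>x. q x - (if t < \<phi> x then q x else 0))"
      using q_integrable upper by auto
  qed (use le q_nonneg in \<open>force split: split_indicator\<close>)
  also have "\<dots> = 1 - superlevel_mass \<phi> q t"
    unfolding superlevel_mass_def using q_integrable upper q_total by (simp add: set_integral_diff)
  finally show ?thesis by simp
qed

lemma expect_layer_cake:
  assumes "mono \<phi>" "L \<le> \<phi> 0" "\<phi> 1 \<le> U"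
  shows "expect q \<phi> = L + (LINT t:{L..U}|lborel. superlevel_mass \<phi> q t)"
  using layer_cake(2)[OF assms(1) q_measurable q_integrable q_nonneg assms(2,3)] q_total
  by (simp add: expect_def)

lemma set_integrable_expect:
  assumes "mono \<phi>"
  shows "set_integrable lborel {0..1} (\<lambda>x. \<phi> x * q x)"
  using monoD[OF assms, of 0] monoD[OF assms, of _ 1] borel_measurable_mono[OF assms]
  by (intro set_integrable_mult_bounded[OF q_integrable _ q_measurable, of _ "\<bar>\<phi> 0\<bar> + \<bar>\<phi> 1\<bar>"]) force+

lemma expect_bounds:
  assumes mono: "mono \<phi>"
  shows "\<phi> 0 \<le> expect q \<phi>" "expect q \<phi> \<le> \<phi> 1"
proof -
  note phi_q = set_integrable_expect[OF mono]
  have range: "\<phi> 0 \<le> \<phi> x" "\<phi> x \<le> \<phi> 1" if "x \<in> {0..1}" for x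
    using that monoD[OF mono] by auto
  have "(LINT x:{0..1}|lborel. \<phi> 0 * q x) \<le> expect q \<phi>"
    unfolding expect_def
    by (rule set_integral_mono) (use phi_q q_integrable range q_nonneg in \<open>auto intro: mult_right_mono\<close>)
  then show "\<phi> 0 \<le> expect q \<phi>" using q_total by simp
  have "expect q \<phi> \<le> (LINT x:{0..1}|lborel. \<phi> 1 * q x)"
    unfolding expect_def
    by (rule set_integral_mono) (use phi_q q_integrable range q_nonneg in \<open>auto intro: mult_right_mono\<close>)
  then show "expect q \<phi> \<le> \<phi> 1" using q_total by simp
qed

end

locale stochastic_order = lower: density q1 + upper: density q2 for q1 q2 +
  assumes cdf_le: "\<And>s. s \<in> {0<..<1} \<Longrightarrow> cdf q2 s \<le> cdf q1 s"
begin

lemma superlevel_mass_mono: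
  assumes mono: "mono \<phi>"
  shows "superlevel_mass \<phi> q1 t \<le> superlevel_mass \<phi> q2 t"
proof -
  define s where "s = level_cut \<phi> t"
  have "s \<in> {0..1}" using level_cut_in_unit[OF mono] by (simp add: s_def)
  then have "cdf q2 s \<le> cdf q1 s"
    using cdf_le[of s] by (cases "s = 0 \<or> s = 1") (auto simp: lower.cdf_0 upper.cdf_0 lower.cdf_1 upper.cdf_1)
  then show ?thesis
    by (simp add: lower.superlevel_mass_eq_cdf[OF mono] upper.superlevel_mass_eq_cdf[OF mono] s_def)
qed

lemma expect_mono:
  assumes mono: "mono \<phi>"
  shows "expect q1 \<phi> \<le> expect q2 \<phi>"
proof -
  have "(LINT t:{\<phi> 0..\<phi> 1}|lborel. superlevel_mass \<phi> q1 t) \<le> (LINT t:{\<phi> 0..\<phi> 1}|lborel. superlevel_mass \<phi> q2 t)"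
    by (intro set_integral_mono superlevel_mass_mono[OF mono]
        set_integrable_superlevel_mass[OF mono lower.q_measurable lower.q_integrable lower.q_nonneg]
        set_integrable_superlevel_mass[OF mono upper.q_measurable upper.q_integrable upper.q_nonneg]) auto
  then show ?thesis
    using lower.expect_layer_cake[OF mono order_refl order_refl]
      upper.expect_layer_cake[OF mono order_refl order_refl] by simp
qed

lemma expect_combination_layer_cake:
  assumes mono: "mono \<phi>" and "L \<le> \<phi> 0" "\<phi> 1 \<le> U"
  shows "set_integrable lborel {L..U} (\<lambda>t. \<alpha> * superlevel_mass \<phi> q2 t - \<beta> * superlevel_mass \<phi> q1 t)"
    and "\<alpha> * expect q2 \<phi> - \<beta> * expect q1 \<phi>
           = (\<alpha> - \<beta>) * L + (LINT t:{L..U}|lborel. \<alpha> * superlevel_mass \<phi> q2 t - \<beta> * superlevel_mass \<phi> q1 t)"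
proof -
  have i1: "set_integrable lborel {L..U} (superlevel_mass \<phi> q1)"
    by (rule set_integrable_superlevel_mass[OF mono lower.q_measurable lower.q_integrable lower.q_nonneg assms(2,3)])
  have i2: "set_integrable lborel {L..U} (superlevel_mass \<phi> q2)"
    by (rule set_integrable_superlevel_mass[OF mono upper.q_measurable upper.q_integrable upper.q_nonneg assms(2,3)])
  from i1 i2 show "set_integrable lborel {L..U} (\<lambda>t. \<alpha> * superlevel_mass \<phi> q2 t - \<beta> * superlevel_mass \<phi> q1 t)"
    by auto
  from i1 i2 show "\<alpha> * expect q2 \<phi> - \<beta> * expect q1 \<phi>
           = (\<alpha> - \<beta>) * L + (LINT t:{L..U}|lborel. \<alpha> * superlevel_mass \<phi> q2 t - \<beta> * superlevel_mass \<phi> q1 t)"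
    using lower.expect_layer_cake[OF assms] upper.expect_layer_cake[OF assms]
    by (simp add: set_integral_diff algebra_simps)
qed

end

locale strong_stochastic_order = lower: density q1 + upper: density q2 for q1 q2 +
  fixes C c x1 x2 xt1 xt2 :: real
  assumes C_ge_1: "1 \<le> C" and c_nonneg: "0 \<le> c"
    and points: "0 \<le> x1" "x1 < xt1" "xt1 < xt2" "xt2 < x2" "x2 \<le> 1"
    and cdf_ratio_left: "\<And>s. s \<in> {0<..<x2} \<Longrightarrow> C * cdf q2 s \<le> cdf q1 s"
    and cdf_ratio_right: "\<And>s. s \<in> {x1<..<1} \<Longrightarrow> C * (1 - cdf q1 s) \<le> 1 - cdf q2 s"
    and density_lower: "\<And>x. x \<in> {x1..x2} \<Longrightarrow> c \<le> q1 x" "\<And>x. x \<in> {x1..x2} \<Longrightarrow> c \<le> q2 x"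

sublocale strong_stochastic_order \<subseteq> stochastic_order
proof
  fix s :: real assume s: "s \<in> {0<..<1}"
  have F: "0 \<le> cdf q2 s" "cdf q1 s \<le> 1"
    using s lower.cdf_bounds upper.cdf_bounds by auto
  show "cdf q2 s \<le> cdf q1 s"
  proof (cases "s < x2")
    case True
    then have "C * cdf q2 s \<le> cdf q1 s" using s cdf_ratio_left by auto
    moreover have "cdf q2 s \<le> C * cdf q2 s" using C_ge_1 F mult_right_mono[of 1 C] by fastforce
    ultimately show ?thesis by linarith
  next
    case False
    then have "C * (1 - cdf q1 s) \<le> 1 - cdf q2 s" using s points cdf_ratio_right by auto
    moreover have "1 - cdf q1 s \<le> C * (1 - cdf q1 s)" using C_ge_1 F mult_right_mono[of 1 C] by fastforce
    ultimately show ?thesis by linarith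
  qed
qed

context strong_stochastic_order
begin

lemma superlevel_gap_below:
  assumes mono: "mono \<phi>" and t: "t < \<phi> xt2"
  shows "C - 1 \<le> C * superlevel_mass \<phi> q2 t - superlevel_mass \<phi> q1 t"
proof -
  define s where "s = level_cut \<phi> t"
  have s: "s \<in> {0..1}" using level_cut_in_unit[OF mono] by (simp add: s_def)
  have "s \<le> xt2"
    using le_below_level_cut[OF mono, of xt2 t] t points by (force simp: s_def)
  then have "C * cdf q2 s \<le> cdf q1 s"
    using cdf_ratio_left[of s] s points by (cases "s = 0") (auto simp: lower.cdf_0 upper.cdf_0)
  then show ?thesis
    by (simp add: lower.superlevel_mass_eq_cdf[OF mono] upper.superlevel_mass_eq_cdf[OF mono]
        s_def[symmetric] algebra_simps)
qed

lemma superlevel_gap_above: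
  assumes mono: "mono \<phi>" and t: "\<phi> xt1 \<le> t"
  shows "C * superlevel_mass \<phi> q1 t \<le> superlevel_mass \<phi> q2 t"
proof -
  define s where "s = level_cut \<phi> t"
  have s: "s \<in> {0..1}" using level_cut_in_unit[OF mono] by (simp add: s_def)
  have "xt1 \<le> s"
    using gt_above_level_cut[OF mono, of xt1 t] t points by (force simp: s_def)
  then have "C * (1 - cdf q1 s) \<le> 1 - cdf q2 s"
    using cdf_ratio_right[of s] s points by (cases "s = 1") (auto simp: lower.cdf_1 upper.cdf_1)
  then show ?thesis
    by (simp add: lower.superlevel_mass_eq_cdf[OF mono] upper.superlevel_mass_eq_cdf[OF mono] s_def[symmetric])
qed

lemma superlevel_mass_below_ge:
  assumes mono: "mono \<phi>" and t: "t < \<phi> xt2"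
  shows "c * (x2 - xt2) \<le> superlevel_mass \<phi> q2 t"
proof -
  have "c * (x2 - xt2) \<le> (LINT x:{xt2..x2}|lborel. q2 x)"
    using points density_lower(2)
    by (intro set_integral_Icc_ge_const set_integrable_subset[OF upper.q_integrable]) auto
  also have "\<dots> \<le> superlevel_mass \<phi> q2 t"
    using t monoD[OF mono, of xt2] points by (intro upper.superlevel_mass_ge[OF mono]) force+
  finally show ?thesis .
qed

lemma superlevel_mass_above_le:
  assumes mono: "mono \<phi>" and t: "\<phi> xt1 \<le> t"
  shows "superlevel_mass \<phi> q1 t \<le> 1 - c * (xt1 - x1)"
proof -
  have "c * (xt1 - x1) \<le> (LINT x:{x1..xt1}|lborel. q1 x)"
    using points density_lower(1)
    by (intro set_integral_Icc_ge_const set_integrable_subset[OF lower.q_integrable]) auto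
  moreover have "superlevel_mass \<phi> q1 t \<le> 1 - (LINT x:{x1..xt1}|lborel. q1 x)"
    using t monoD[OF mono, of _ xt1] points by (intro lower.superlevel_mass_le[OF mono]) force+
  ultimately show ?thesis by linarith
qed

lemma superlevel_combination_ge:
  assumes "mono \<phi>"
  shows "(C - 1) * superlevel_mass \<phi> q2 t \<le> C * superlevel_mass \<phi> q2 t - superlevel_mass \<phi> q1 t"
    and "C * superlevel_mass \<phi> q1 t - superlevel_mass \<phi> q2 t \<le> (C - 1) * superlevel_mass \<phi> q1 t"
  using superlevel_mass_mono[OF assms, of t] by (simp_all add: algebra_simps)

text \<open>Integrate a step function below \<open>C Q\<^sub>2 - Q\<^sub>1\<close> in the layer-cake formula.\<close>
lemma expect_gap_right:
  assumes mono: "mono \<phi>" and pos: "0 < \<phi> xt2"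
  shows "(C - 1) * c * (x2 - xt2) * \<phi> xt2 \<le> C * expect q2 \<phi> - expect q1 \<phi>"
proof -
  define L U m K where "L = min (\<phi> 0) 0" and "U = \<phi> 1" and "m = \<phi> xt2"
    and "K = (C - 1) * c * (x2 - xt2)"
  have bounds: "L \<le> \<phi> 0" "\<phi> 1 \<le> U" "L \<le> 0" "0 < m" "m \<le> U"
    using pos monoD[OF mono, of xt2 1] points by (auto simp: L_def U_def m_def)
  define r where "r t = (C - 1) * indicator {L..<0} t + K * indicator {0..<m} t" for t :: real
  have r_int: "set_integrable lborel {L..U} r"
    "(LINT t:{L..U}|lborel. r t) = (C - 1) * (0 - L) + K * m"
    using set_integral_indicator_subset[of "{L..<0}" "{L..U}"]
      set_integral_indicator_subset[of "{0..<m}" "{L..U}"] bounds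
    unfolding r_def by (simp_all add: subset_iff)
  have "r t \<le> C * superlevel_mass \<phi> q2 t - superlevel_mass \<phi> q1 t" if "t \<in> {L..U}" for t
  proof -
    consider "t < 0" | "0 \<le> t" "t < m" | "m \<le> t" by linarith
    then show ?thesis
    proof cases
      case 1
      then show ?thesis
        using that superlevel_gap_below[OF mono, of t] bounds by (simp add: r_def m_def)
    next
      case 2
      have "K \<le> (C - 1) * superlevel_mass \<phi> q2 t"
        using superlevel_mass_below_ge[OF mono, of t] 2 C_ge_1
        by (simp add: K_def m_def mult.assoc mult_left_mono)
      then show ?thesis
        using 2 superlevel_combination_ge(1)[OF mono, of t] by (simp add: r_def)
    next
      case 3
      have "0 \<le> (C - 1) * superlevel_mass \<phi> q2 t"
        using C_ge_1 upper.superlevel_mass_bounds(1)[OF mono, of t] by simp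
      then show ?thesis
        using 3 bounds superlevel_combination_ge(1)[OF mono, of t] by (simp add: r_def)
    qed
  qed
  then have "(LINT t:{L..U}|lborel. r t)
      \<le> (LINT t:{L..U}|lborel. C * superlevel_mass \<phi> q2 t - superlevel_mass \<phi> q1 t)"
    using expect_combination_layer_cake(1)[OF mono bounds(1,2), of C 1] r_int
    by (intro set_integral_mono) auto
  then show ?thesis
    using expect_combination_layer_cake(2)[OF mono bounds(1,2), of C 1] r_int
    by (simp add: K_def m_def algebra_simps)
qed

lemma expect_gap_left:
  assumes mono: "mono \<phi>" and neg: "\<phi> xt1 < 0"
  shows "(C - 1) * c * (xt1 - x1) * (- \<phi> xt1) \<le> expect q2 \<phi> - C * expect q1 \<phi>"
proof -
  define L U m K where "L = min (\<phi> 0) 0" and "U = max (\<phi> 1) 0" and "m = - \<phi> xt1"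
    and "K = (C - 1) * c * (xt1 - x1)"
  have bounds: "L \<le> \<phi> 0" "\<phi> 1 \<le> U" "0 \<le> U" "L \<le> - m" "0 < m"
    using neg monoD[OF mono, of 0 xt1] points by (auto simp: L_def U_def m_def)
  define r where "r t = K * indicator {-m..<0} t - (C - 1) * indicator {L..<0} t" for t :: real
  have r_int: "set_integrable lborel {L..U} r"
    "(LINT t:{L..U}|lborel. r t) = K * m - (C - 1) * (0 - L)"
    using set_integral_indicator_subset[of "{L..<0}" "{L..U}"]
      set_integral_indicator_subset[of "{-m..<0}" "{L..U}"] bounds
    unfolding r_def by (simp_all add: subset_iff)
  have "r t \<le> superlevel_mass \<phi> q2 t - C * superlevel_mass \<phi> q1 t" if "t \<in> {L..U}" for t
  proof -
    have Q1: "superlevel_mass \<phi> q1 t \<le> 1"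
      by (rule lower.superlevel_mass_bounds(2)[OF mono])
    consider "0 \<le> t" | "t < - m" | "- m \<le> t" "t < 0" by linarith
    then show ?thesis
    proof cases
      case 1
      then show ?thesis
        using superlevel_gap_above[OF mono, of t] neg by (simp add: r_def)
    next
      case 2
      then show ?thesis
        using that bounds C_ge_1 superlevel_combination_ge(2)[OF mono, of t] mult_left_mono[OF Q1, of "C - 1"]
        by (simp add: r_def)
    next
      case 3
      have "superlevel_mass \<phi> q1 t \<le> 1 - c * (xt1 - x1)"
        using superlevel_mass_above_le[OF mono, of t] 3 by (simp add: m_def)
      then have "(C - 1) * superlevel_mass \<phi> q1 t \<le> (C - 1) - K"
        using C_ge_1 mult_left_mono[of _ _ "C - 1"] by (fastforce simp: K_def algebra_simps)
      then show ?thesis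
        using that 3 bounds superlevel_combination_ge(2)[OF mono, of t] by (simp add: r_def)
    qed
  qed
  then have "(LINT t:{L..U}|lborel. r t)
      \<le> (LINT t:{L..U}|lborel. 1 * superlevel_mass \<phi> q2 t - C * superlevel_mass \<phi> q1 t)"
    using expect_combination_layer_cake(1)[OF mono bounds(1,2), of 1 C] r_int
    by (intro set_integral_mono) auto
  then show ?thesis
    using expect_combination_layer_cake(2)[OF mono bounds(1,2), of 1 C] r_int
    by (simp add: K_def m_def algebra_simps)
qed

lemma level_bound_by_expectations:
  assumes mono: "mono \<phi>"
  shows "(C - 1) * c * min (x2 - xt2) (xt1 - x1) * max \<bar>\<phi> xt1\<bar> \<bar>\<phi> xt2\<bar>
     \<le> C * (max (expect q2 \<phi>) 0 + max (- expect q1 \<phi>) 0)"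
proof -
  define g1 g2 K where "g1 = expect q1 \<phi>" and "g2 = expect q2 \<phi>"
    and "K = (C - 1) * c * min (x2 - xt2) (xt1 - x1)"
  have K: "0 \<le> K" "K \<le> (C - 1) * c * (x2 - xt2)" "K \<le> (C - 1) * c * (xt1 - x1)"
    using C_ge_1 c_nonneg points by (auto simp: K_def intro!: mult_left_mono)
  have increasing: "\<phi> xt1 \<le> \<phi> xt2" using monoD[OF mono] points by simp
  have rhs: "C * g2 - g1 \<le> C * (max g2 0 + max (- g1) 0)" "g2 - C * g1 \<le> C * (max g2 0 + max (- g1) 0)"
  proof -
    have "C * g2 \<le> C * max g2 0" "C * (- g1) \<le> C * max (- g1) 0"
      using C_ge_1 by (intro mult_left_mono; simp)+
    moreover have "1 * max g2 0 \<le> C * max g2 0" "1 * max (- g1) 0 \<le> C * max (- g1) 0"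
      using C_ge_1 by (intro mult_right_mono; simp)+
    ultimately show "C * g2 - g1 \<le> C * (max g2 0 + max (- g1) 0)" "g2 - C * g1 \<le> C * (max g2 0 + max (- g1) 0)"
      by (simp_all add: algebra_simps)
  qed
  consider "0 < \<phi> xt2" "- \<phi> xt1 \<le> \<phi> xt2" | "\<phi> xt1 < 0" "\<phi> xt2 < - \<phi> xt1" | "0 \<le> \<phi> xt1" "\<phi> xt2 \<le> 0"
    using increasing by linarith
  then have "K * max \<bar>\<phi> xt1\<bar> \<bar>\<phi> xt2\<bar> \<le> C * (max g2 0 + max (- g1) 0)"
  proof cases
    case 1
    have "K * \<phi> xt2 \<le> (C - 1) * c * (x2 - xt2) * \<phi> xt2" using K 1 by (intro mult_right_mono) auto
    also have "\<dots> \<le> C * g2 - g1" using expect_gap_right[OF mono] 1 by (simp add: g1_def g2_def)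
    finally show ?thesis using 1 increasing rhs by simp
  next
    case 2
    have "K * (- \<phi> xt1) \<le> (C - 1) * c * (xt1 - x1) * (- \<phi> xt1)" using K 2 by (intro mult_right_mono) auto
    also have "\<dots> \<le> g2 - C * g1" using expect_gap_left[OF mono] 2 by (simp add: g1_def g2_def)
    finally show ?thesis using 2 increasing rhs by simp
  next
    case 3
    then have "\<phi> xt1 = 0" "\<phi> xt2 = 0" using increasing by linarith+
    then show ?thesis using C_ge_1 by simp
  qed
  then show ?thesis by (simp add: K_def g1_def g2_def)
qed

end

definition clip01 :: "real \<Rightarrow> real" where
  "clip01 x = max 0 (min 1 x)"

lemma mono_Hclass_shift:
  assumes hH: "h \<in> Hclass a" and b: "a \<le> b" "0 \<le> b"
  shows "mono (\<lambda>x. h (clip01 x) + b * clip01 x)"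
proof (rule monoI)
  fix x y :: real assume "x \<le> y"
  define u v where "u = clip01 x" and "v = clip01 y"
  have uv: "0 \<le> u" "u \<le> v" "v \<le> 1" using \<open>x \<le> y\<close> by (auto simp: u_def v_def clip01_def)
  have "h u + b * u \<le> h v + b * v"
  proof (cases "u = v")
    case False
    then have "u < v" using uv by simp
    then have "- a \<le> (h v - h u) / (v - u)" using hH uv by (auto simp: Hclass_def)
    then have "- a * (v - u) \<le> h v - h u" using \<open>u < v\<close> by (simp add: pos_le_divide_eq)
    moreover have "- b * (v - u) \<le> - a * (v - u)" using b \<open>u < v\<close> by (intro mult_right_mono) auto
    ultimately show ?thesis by (simp add: algebra_simps)
  qed simp
  then show "h (clip01 x) + b * clip01 x \<le> h (clip01 y) + b * clip01 y"
    by (simp add: u_def v_def)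
qed

lemma clip01_id: "x \<in> {0..1} \<Longrightarrow> clip01 x = x"
  by (auto simp: clip01_def)

lemma trunc_norm_le:
  assumes "xt1 \<le> xt2" and bound: "\<And>x. x \<in> {xt1..xt2} \<Longrightarrow> \<bar>h x\<bar> \<le> B"
  shows "trunc_norm xt1 xt2 h \<le> B * sqrt (xt2 - xt1)"
proof -
  have B: "0 \<le> B" using bound[of xt1] assms(1) by auto
  have "(LINT x:{xt1..xt2}|lborel. (h x)^2) \<le> B^2 * (xt2 - xt1)"
  proof (cases "set_integrable lborel {xt1..xt2} (\<lambda>x. (h x)^2)")
    case True
    have "(LINT x:{xt1..xt2}|lborel. (h x)^2) \<le> (LINT x:{xt1..xt2}|lborel. B^2)"
    proof (rule set_integral_mono[OF True])
      show "set_integrable lborel {xt1..xt2} (\<lambda>x. B^2)"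
        unfolding set_integrable_def using assms(1)
        by (intro integrable_scaleR_left) (simp add: integrable_indicator_iff)
      show "(h x)^2 \<le> B^2" if "x \<in> {xt1..xt2}" for x
        using bound[OF that] power_mono[of "\<bar>h x\<bar>" B 2] by simp
    qed
    then show ?thesis using assms(1) by (simp add: set_integral_const mult.commute)
  next
    case False
    then show ?thesis
      using assms(1) by (simp add: set_lebesgue_integral_def set_integrable_def not_integrable_integral_eq)
  qed
  then have "trunc_norm xt1 xt2 h \<le> sqrt (B^2 * (xt2 - xt1))"
    unfolding trunc_norm_def by (rule real_sqrt_le_mono)
  then show ?thesis using B by (simp add: real_sqrt_mult)
qed

lemma trunc_norm_one_level_bound:
  assumes "0 \<le> xt1" "xt1 < xt2" "xt2 \<le> 1" and mono: "mono \<phi>" and "0 \<le> b"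
    and h: "\<forall>x\<in>{0..1}. h x = \<phi> x - b * x" and "trunc_norm xt1 xt2 h = 1"
  shows "sqrt (1 / (xt2 - xt1)) \<le> max \<bar>\<phi> xt1\<bar> \<bar>\<phi> xt2\<bar> + b"
proof -
  have "\<bar>h x\<bar> \<le> max \<bar>\<phi> xt1\<bar> \<bar>\<phi> xt2\<bar> + b" if "x \<in> {xt1..xt2}" for x
  proof -
    have "\<phi> xt1 \<le> \<phi> x" "\<phi> x \<le> \<phi> xt2" using that monoD[OF mono] by auto
    then have "\<bar>\<phi> x\<bar> \<le> max \<bar>\<phi> xt1\<bar> \<bar>\<phi> xt2\<bar>" by auto
    moreover have "\<bar>b * x\<bar> \<le> b" using assms that by (simp add: abs_mult mult_left_le)
    moreover have "h x = \<phi> x - b * x" using h that assms by auto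
    ultimately show ?thesis by linarith
  qed
  then have "1 \<le> (max \<bar>\<phi> xt1\<bar> \<bar>\<phi> xt2\<bar> + b) * sqrt (xt2 - xt1)"
    using trunc_norm_le[of xt1 xt2 h] assms by simp
  then show ?thesis
    using assms by (simp add: real_sqrt_divide divide_le_eq)
qed

lemma tau_le_inverse:
  assumes "0 < r" and lower: "\<And>h. h \<in> Hclass a \<Longrightarrow> trunc_norm xt1 xt2 h = 1 \<Longrightarrow> r \<le> L2norm (Top f h)"
  shows "tau xt1 xt2 f a \<le> ereal (1 / r)"
  unfolding tau_def
proof (rule Sup_least, clarify)
  fix h assume h: "h \<in> Hclass a" "trunc_norm xt1 xt2 h = 1"
  have "0 < L2norm (Top f h)" "1 / L2norm (Top f h) \<le> 1 / r"
    using lower[OF h] assms(1) by (auto intro: divide_left_mono)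
  then show "(if L2norm (Top f h) = 0 then \<infinity> else ereal (trunc_norm xt1 xt2 h / L2norm (Top f h)))
      \<le> ereal (1 / r)"
    using h(2) by simp
qed

lemma min_mult_sq_le:
  fixes \<alpha> \<beta> n u v :: real
  assumes "0 \<le> \<alpha>" "0 \<le> \<beta>" "0 \<le> n" "n \<le> \<alpha> + \<beta>" "0 \<le> u" "0 \<le> v"
  shows "min u v * n^2 / 2 \<le> \<alpha>^2 * u + \<beta>^2 * v"
proof -
  have "n^2 \<le> (\<alpha> + \<beta>)^2" using assms by (intro power_mono) auto
  also have "\<dots> \<le> 2 * (\<alpha>^2 + \<beta>^2)"
    using sum_squares_ge_zero[of "\<alpha> - \<beta>" 0] by (simp add: power2_eq_square algebra_simps)
  finally have "min u v * n^2 / 2 \<le> min u v * \<alpha>^2 + min u v * \<beta>^2"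
    using assms(5,6) mult_left_mono[of "n^2" "2 * (\<alpha>^2 + \<beta>^2)" "min u v"] by (simp add: algebra_simps)
  also have "\<dots> \<le> \<alpha>^2 * u + \<beta>^2 * v"
    by (intro add_mono) (simp_all add: mult.commute mult_right_mono)
  finally show ?thesis .
qed

locale monotone_iv =
  fixes f :: "real \<Rightarrow> real \<Rightarrow> real" and c_f c_W C_F w1 w2 x1 x2 xt1 xt2 :: real
  assumes f_measurable: "(\<lambda>p. f (fst p) (snd p)) \<in> borel_measurable lborel"
    and f_nonneg: "\<And>x w. x \<in> {0..1} \<Longrightarrow> w \<in> {0..1} \<Longrightarrow> 0 \<le> f x w"
    and condCDF_antimono: "\<And>x w' w''. x \<in> {0<..<1} \<Longrightarrow> w' \<in> {0<..<1} \<Longrightarrow> w'' \<in> {0<..<1} \<Longrightarrow>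
          w' \<le> w'' \<Longrightarrow> condCDF f x w'' \<le> condCDF f x w'"
    and condCDF_ratio_left: "\<And>x. x \<in> {0<..<x2} \<Longrightarrow> C_F * condCDF f x w2 \<le> condCDF f x w1"
    and condCDF_ratio_right: "\<And>x. x \<in> {x1<..<1} \<Longrightarrow> C_F * (1 - condCDF f x w1) \<le> 1 - condCDF f x w2"
    and condDens_lower: "\<And>x w. x \<in> {x1..x2} \<Longrightarrow> w \<in> {w1, w2} \<Longrightarrow> c_f \<le> condDens f x w"
    and fW_lower: "\<And>w. w \<in> {0..1} \<Longrightarrow> c_W \<le> fW f w"
    and fW_bounded: "\<exists>C. \<forall>w\<in>{0..1}. fW f w \<le> C"
    and points: "0 \<le> x1" "x1 < xt1" "xt1 < xt2" "xt2 < x2" "x2 \<le> 1"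
    and instruments: "0 < w1" "w1 < w2" "w2 < 1"
    and constants: "1 < C_F" "0 < c_f" "0 < c_W"
begin

abbreviation dens :: "real \<Rightarrow> real \<Rightarrow> real" where
  "dens w \<equiv> (\<lambda>x. condDens f x w)"

lemma f_measurable_pair[measurable]: "(\<lambda>p. f (fst p) (snd p)) \<in> borel_measurable (lborel \<Otimes>\<^sub>M lborel)"
  using f_measurable by (simp add: lborel_prod)

lemma f_measurable_section[measurable]: "(\<lambda>x. f x w) \<in> borel_measurable borel"
proof -
  have "(\<lambda>x. (x, w)) \<in> measurable borel (lborel \<Otimes>\<^sub>M lborel)" by measurable
  from measurable_comp[OF this f_measurable_pair] show ?thesis by (simp add: comp_def)
qed

lemma fW_pos: "w \<in> {0..1} \<Longrightarrow> 0 < fW f w"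
  using fW_lower constants by force

lemma density_dens:
  assumes w: "w \<in> {0..1}"
  shows "density (dens w)"
proof
  have "set_integrable lborel {0..1} (\<lambda>x. f x w)"
  proof (rule ccontr)
    assume "\<not> ?thesis"
    then have "fW f w = 0" unfolding fW_def set_lebesgue_integral_def set_integrable_def
      by (simp add: not_integrable_integral_eq)
    then show False using fW_pos[OF w] by simp
  qed
  then show "set_integrable lborel {0..1} (dens w)"
    by (simp add: condDens_def)
  show "(LINT x:{0..1}|lborel. dens w x) = 1"
    using fW_pos[OF w] by (simp add: condDens_def fW_def[symmetric])
qed (use f_nonneg fW_pos[OF w] w in \<open>auto simp: condDens_def\<close>)

lemma condCDF_eq_cdf: "condCDF f s w = cdf (dens w) s"
  by (simp add: condCDF_def condDens_def cdf_def)

lemma stochastic_order_dens: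
  assumes "w' \<in> {0<..<1}" "w'' \<in> {0<..<1}" "w' \<le> w''"
  shows "stochastic_order (dens w') (dens w'')"
proof -
  interpret lower: density "dens w'" using assms by (intro density_dens) auto
  interpret upper: density "dens w''" using assms by (intro density_dens) auto
  show ?thesis
    by unfold_locales (use condCDF_antimono assms in \<open>simp add: condCDF_eq_cdf\<close>)
qed

lemma strong_stochastic_order_dens:
  "strong_stochastic_order (dens w1) (dens w2) C_F c_f x1 x2 xt1 xt2"
proof -
  interpret lower: density "dens w1" using instruments by (intro density_dens) auto
  interpret upper: density "dens w2" using instruments by (intro density_dens) auto
  show ?thesis
    using condCDF_ratio_left condCDF_ratio_right condDens_lower points constants
    by unfold_locales (simp_all add: condCDF_eq_cdf)
qed

lemma Top_eq_expect:
  assumes mono: "mono \<phi>" and w: "w \<in> {0..1}" and h: "\<forall>x\<in>{0..1}. h x = \<phi> x - b * x"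
  shows "Top f h w = fW f w * (expect (dens w) \<phi> - b * expect (dens w) (\<lambda>x. x))"
proof -
  interpret density "dens w" by (rule density_dens[OF w])
  have "Top f h w = (LINT x:{0..1}|lborel. fW f w * (\<phi> x * dens w x - b * (x * dens w x)))"
    unfolding Top_def
  proof (rule set_lebesgue_integral_cong)
    show "\<forall>x. x \<in> {0..1} \<longrightarrow> h x * f x w = fW f w * (\<phi> x * dens w x - b * (x * dens w x))"
      using fW_pos[OF w] h by (simp add: condDens_def) (simp add: field_simps)
  qed simp
  then show ?thesis
    using set_integrable_expect[OF mono] set_integrable_expect[of "\<lambda>x. x"]
    by (simp add: expect_def set_integral_diff mono_def)
qed

lemma Top_measurable:
  assumes "L2 h"
  shows "Top f h \<in> borel_measurable lborel"
proof -
  define H where "H x = indicator {0..1} x *\<^sub>R h x" for x :: real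
  have [measurable]: "H \<in> borel_measurable lborel"
    using assms unfolding L2_def H_def set_borel_measurable_def by simp
  have [measurable]: "(\<lambda>p. f (snd p) (fst p)) \<in> borel_measurable (lborel \<Otimes>\<^sub>M lborel)"
    using measurable_comp[OF measurable_pair_swap' f_measurable_pair] by (simp add: comp_def case_prod_beta)
  have "(\<lambda>(w, x). H x * f x w) \<in> borel_measurable (lborel \<Otimes>\<^sub>M lborel)"
    by (simp add: case_prod_beta')
  then have "(\<lambda>w. \<integral>x. H x * f x w \<partial>lborel) \<in> borel_measurable lborel"
    by (rule lborel.borel_measurable_lebesgue_integral)
  moreover have "Top f h = (\<lambda>w. \<integral>x. H x * f x w \<partial>lborel)"
    unfolding Top_def set_lebesgue_integral_def H_def by (auto simp: fun_eq_iff mult_ac)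
  ultimately show ?thesis by simp
qed

lemma Top_bounded:
  assumes mono: "mono \<phi>" and b: "0 \<le> b" and h: "\<forall>x\<in>{0..1}. h x = \<phi> x - b * x"
  shows "\<exists>B. \<forall>w\<in>{0..1}. \<bar>Top f h w\<bar> \<le> B"
proof -
  obtain C where C: "\<And>w. w \<in> {0..1} \<Longrightarrow> fW f w \<le> C" using fW_bounded by blast
  have "\<bar>Top f h w\<bar> \<le> C * (\<bar>\<phi> 0\<bar> + \<bar>\<phi> 1\<bar> + b)" if w: "w \<in> {0..1}" for w
  proof -
    interpret density "dens w" by (rule density_dens[OF w])
    have "mono (\<lambda>x::real. x)" by (rule monoI)
    then have "0 \<le> b * expect (dens w) (\<lambda>x. x)" "b * expect (dens w) (\<lambda>x. x) \<le> b"
      using expect_bounds[of "\<lambda>x. x"] b by (simp_all add: mult_left_le)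
    with expect_bounds[OF mono]
    have "\<bar>expect (dens w) \<phi> - b * expect (dens w) (\<lambda>x. x)\<bar> \<le> \<bar>\<phi> 0\<bar> + \<bar>\<phi> 1\<bar> + b"
      by (simp add: abs_le_iff) linarith
    moreover have "0 < fW f w" "fW f w \<le> C" using fW_pos[OF w] C[OF w] by auto
    ultimately show ?thesis
      unfolding Top_eq_expect[OF mono w h] abs_mult by (intro mult_mono) auto
  qed
  then show ?thesis by blast
qed

lemma set_integrable_Top_sq:
  assumes "L2 h" and "\<exists>B. \<forall>w\<in>{0..1}. \<bar>Top f h w\<bar> \<le> B"
  shows "set_integrable lborel {0..1} (\<lambda>w. (Top f h w)^2)"
proof -
  obtain B where bound: "\<And>w. w \<in> {0..1} \<Longrightarrow> \<bar>Top f h w\<bar> \<le> B" using assms(2) by blast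
  have [measurable]: "Top f h \<in> borel_measurable lborel" by (rule Top_measurable[OF assms(1)])
  have "integrable lborel (\<lambda>w::real. B^2 * indicator {0..1} w :: real)"
    by (intro integrable_mult_right) (simp add: integrable_indicator_iff)
  then show ?thesis unfolding set_integrable_def
  proof (rule Bochner_Integration.integrable_bound)
    show "AE w in lborel. norm (indicator {0..1} w *\<^sub>R (Top f h w)^2) \<le> norm (B^2 * indicator {0..1} w)"
    proof (rule AE_I2)
      fix w :: real
      show "norm (indicator {0..1} w *\<^sub>R (Top f h w)^2) \<le> norm (B^2 * indicator {0..1} w)"
      proof (cases "w \<in> {0..1}")
        case True
        have "\<bar>Top f h w\<bar>^2 \<le> \<bar>B\<bar>^2" using bound[OF True] by (intro power_mono) auto
        then show ?thesis using True by simp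
      qed simp
    qed
  qed measurable
qed

lemma abs_Top_ge:
  assumes mono: "mono \<phi>" and w: "w \<in> {0..1}" and h: "\<forall>x\<in>{0..1}. h x = \<phi> x - b * x"
  shows "c_W * \<bar>expect (dens w) \<phi> - b * expect (dens w) (\<lambda>x. x)\<bar> \<le> \<bar>Top f h w\<bar>"
proof -
  have "c_W \<le> \<bar>fW f w\<bar>" using fW_lower[OF w] by auto
  then show ?thesis
    by (simp add: Top_eq_expect[OF mono w h] abs_mult mult_right_mono)
qed

lemma abs_Top_ge_left:
  assumes mono: "mono \<phi>" and b: "0 \<le> b" and w: "w \<in> {0<..<w1}"
    and h: "\<forall>x\<in>{0..1}. h x = \<phi> x - b * x"
  shows "c_W * max (- expect (dens w1) \<phi>) 0 \<le> \<bar>Top f h w\<bar>"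
proof -
  interpret stochastic_order "dens w" "dens w1"
    by (rule stochastic_order_dens) (use w instruments in auto)
  have "mono (\<lambda>x::real. x)" by (rule monoI)
  then have "0 \<le> b * expect (dens w) (\<lambda>x. x)"
    using lower.expect_bounds(1)[of "\<lambda>x. x"] b by simp
  then have "expect (dens w) \<phi> - b * expect (dens w) (\<lambda>x. x) \<le> expect (dens w1) \<phi>"
    using expect_mono[OF mono] by simp
  then have "max (- expect (dens w1) \<phi>) 0 \<le> \<bar>expect (dens w) \<phi> - b * expect (dens w) (\<lambda>x. x)\<bar>"
    by linarith
  then have "c_W * max (- expect (dens w1) \<phi>) 0 \<le> c_W * \<bar>expect (dens w) \<phi> - b * expect (dens w) (\<lambda>x. x)\<bar>"
    using constants by (intro mult_left_mono) auto
  also have "\<dots> \<le> \<bar>Top f h w\<bar>"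
    using abs_Top_ge[OF mono _ h, of w] w instruments by simp
  finally show ?thesis .
qed

lemma abs_Top_ge_right:
  assumes mono: "mono \<phi>" and b: "0 \<le> b" and w: "w \<in> {w2<..<1}"
    and h: "\<forall>x\<in>{0..1}. h x = \<phi> x - b * x"
  shows "c_W * max (expect (dens w2) \<phi> - b) 0 \<le> \<bar>Top f h w\<bar>"
proof -
  interpret stochastic_order "dens w2" "dens w"
    by (rule stochastic_order_dens) (use w instruments in auto)
  have "mono (\<lambda>x::real. x)" by (rule monoI)
  then have "b * expect (dens w) (\<lambda>x. x) \<le> b"
    using upper.expect_bounds(2)[of "\<lambda>x. x"] b by (simp add: mult_left_le)
  then have "expect (dens w2) \<phi> - b \<le> expect (dens w) \<phi> - b * expect (dens w) (\<lambda>x. x)"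
    using expect_mono[OF mono] by simp
  then have "max (expect (dens w2) \<phi> - b) 0 \<le> \<bar>expect (dens w) \<phi> - b * expect (dens w) (\<lambda>x. x)\<bar>"
    by linarith
  then have "c_W * max (expect (dens w2) \<phi> - b) 0 \<le> c_W * \<bar>expect (dens w) \<phi> - b * expect (dens w) (\<lambda>x. x)\<bar>"
    using constants by (intro mult_left_mono) auto
  also have "\<dots> \<le> \<bar>Top f h w\<bar>"
    using abs_Top_ge[OF mono _ h, of w] w instruments by simp
  finally show ?thesis .
qed

lemma Top_sq_integral_ge:
  assumes mono: "mono \<phi>" and b: "0 \<le> b" and h: "\<forall>x\<in>{0..1}. h x = \<phi> x - b * x" and "L2 h"
  shows "c_W^2 * ((max (- expect (dens w1) \<phi>) 0)^2 * w1 + (max (expect (dens w2) \<phi> - b) 0)^2 * (1 - w2))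
           \<le> (LINT w:{0..1}|lborel. (Top f h w)^2)"
proof -
  define \<alpha> \<beta> where "\<alpha> = c_W * max (- expect (dens w1) \<phi>) 0" and "\<beta> = c_W * max (expect (dens w2) \<phi> - b) 0"
  define R where "R w = \<alpha>^2 * indicator {0<..<w1} w + \<beta>^2 * indicator {w2<..<1} w" for w :: real
  have sub: "{0<..<w1} \<subseteq> {0..1}" "{w2<..<1} \<subseteq> {0..1}" using instruments by auto
  have R: "set_integrable lborel {0..1} R" "(LINT w:{0..1}|lborel. R w) = \<alpha>^2 * w1 + \<beta>^2 * (1 - w2)"
    using set_integral_indicator_subset[OF sub(1)] set_integral_indicator_subset[OF sub(2)]
      instruments
    unfolding R_def by simp_all
  have Top_sq: "set_integrable lborel {0..1} (\<lambda>w. (Top f h w)^2)"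
    by (rule set_integrable_Top_sq[OF \<open>L2 h\<close> Top_bounded[OF mono b h]])
  have "R w \<le> (Top f h w)^2" if "w \<in> {0..1}" for w
  proof -
    consider "w \<in> {0<..<w1}" | "w \<in> {w2<..<1}" | "w \<notin> {0<..<w1}" "w \<notin> {w2<..<1}" by blast
    then show ?thesis
    proof cases
      case 1
      then have "\<alpha> \<le> \<bar>Top f h w\<bar>" "0 \<le> \<alpha>" "w \<notin> {w2<..<1}"
        using abs_Top_ge_left[OF mono b 1 h] constants instruments by (auto simp: \<alpha>_def)
      then show ?thesis using 1 power_mono[of \<alpha> "\<bar>Top f h w\<bar>" 2] by (simp add: R_def)
    next
      case 2
      then have "\<beta> \<le> \<bar>Top f h w\<bar>" "0 \<le> \<beta>" "w \<notin> {0<..<w1}"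
        using abs_Top_ge_right[OF mono b 2 h] constants instruments by (auto simp: \<beta>_def)
      then show ?thesis using 2 power_mono[of \<beta> "\<bar>Top f h w\<bar>" 2] by (simp add: R_def)
    qed (simp add: R_def)
  qed
  then have "(LINT w:{0..1}|lborel. R w) \<le> (LINT w:{0..1}|lborel. (Top f h w)^2)"
    by (intro set_integral_mono[OF R(1) Top_sq])
  then show ?thesis
    using R(2) by (simp add: \<alpha>_def \<beta>_def power_mult_distrib algebra_simps)
qed

lemma Top_sq_integral_lower_bound:
  defines "K \<equiv> (C_F - 1) * c_f * min (x2 - xt2) (xt1 - x1)" and "\<eta> \<equiv> sqrt (1 / (xt2 - xt1))"
  assumes hH: "h \<in> Hclass a" and norm: "trunc_norm xt1 xt2 h = 1" and a: "a \<le> K * \<eta> / (2 * (K + C_F))"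
  shows "c_W^2 * min w1 (1 - w2) * (K * \<eta> / (2 * C_F))^2 / 2 \<le> (LINT w:{0..1}|lborel. (Top f h w)^2)"
proof -
  define b where "b = max a 0"
  define \<phi> where "\<phi> x = h (clip01 x) + b * clip01 x" for x
  have b: "0 \<le> b" "a \<le> b" by (auto simp: b_def)
  have mono: "mono \<phi>" unfolding \<phi>_def by (rule mono_Hclass_shift[OF hH b(2,1)])
  have h: "\<forall>x\<in>{0..1}. h x = \<phi> x - b * x" by (simp add: \<phi>_def clip01_id)
  define \<alpha> \<beta> M where "\<alpha> = max (- expect (dens w1) \<phi>) 0" and "\<beta> = max (expect (dens w2) \<phi> - b) 0"
    and "M = max \<bar>\<phi> xt1\<bar> \<bar>\<phi> xt2\<bar>"
  have K: "0 < K" and \<eta>: "0 < \<eta>" and C_F: "0 < C_F"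
    using constants points by (auto simp: K_def \<eta>_def)
  have level: "K * M \<le> C_F * (max (expect (dens w2) \<phi>) 0 + \<alpha>)"
    using strong_stochastic_order.level_bound_by_expectations[OF strong_stochastic_order_dens mono]
    by (simp add: K_def M_def \<alpha>_def)
  have trunc: "\<eta> \<le> M + b"
    unfolding \<eta>_def M_def using trunc_norm_one_level_bound[OF _ _ _ mono b(1) h norm] points by simp
  have "a * (K + C_F) \<le> K * \<eta> / 2"
    using a K C_F by (simp add: le_divide_eq algebra_simps)
  then have slope: "b * (K + C_F) \<le> K * \<eta> / 2"
    using K \<eta> by (cases "0 \<le> a") (simp_all add: b_def)
  have "K * \<eta> / 2 \<le> C_F * (\<alpha> + \<beta>)"
  proof -
    have "K * \<eta> \<le> K * M + K * b" using trunc K by (simp add: distrib_left[symmetric])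
    moreover have "C_F * (max (expect (dens w2) \<phi>) 0 + \<alpha>) \<le> C_F * (\<beta> + b + \<alpha>)"
      using C_F b by (intro mult_left_mono) (auto simp: \<beta>_def)
    ultimately show ?thesis using level slope by (simp add: algebra_simps)
  qed
  then have "min w1 (1 - w2) * (K * \<eta> / (2 * C_F))^2 / 2 \<le> \<alpha>^2 * w1 + \<beta>^2 * (1 - w2)"
    using K \<eta> C_F instruments
    by (intro min_mult_sq_le) (auto simp: \<alpha>_def \<beta>_def divide_le_eq mult.commute)
  then have "c_W^2 * min w1 (1 - w2) * (K * \<eta> / (2 * C_F))^2 / 2 \<le> c_W^2 * (\<alpha>^2 * w1 + \<beta>^2 * (1 - w2))"
    by (simp add: mult.assoc mult_left_mono)
  also have "\<dots> \<le> (LINT w:{0..1}|lborel. (Top f h w)^2)"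
    using Top_sq_integral_ge[OF mono b(1) h] hH by (simp add: Hclass_def \<alpha>_def \<beta>_def)
  finally show ?thesis .
qed

lemma tau_le:
  defines "K \<equiv> (C_F - 1) * c_f * min (x2 - xt2) (xt1 - x1)" and "\<eta> \<equiv> sqrt (1 / (xt2 - xt1))"
  assumes "a \<le> K * \<eta> / (2 * (K + C_F))"
  shows "tau xt1 xt2 f a \<le> ereal (1 / sqrt (c_W^2 * min w1 (1 - w2) * (K * \<eta> / (2 * C_F))^2 / 2))"
proof (rule tau_le_inverse)
  show "0 < sqrt (c_W^2 * min w1 (1 - w2) * (K * \<eta> / (2 * C_F))^2 / 2)"
    using constants points instruments by (simp add: K_def \<eta>_def)
  show "sqrt (c_W^2 * min w1 (1 - w2) * (K * \<eta> / (2 * C_F))^2 / 2) \<le> L2norm (Top f h)"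
    if "h \<in> Hclass a" "trunc_norm xt1 xt2 h = 1" for h
    unfolding L2norm_def K_def \<eta>_def
    by (rule real_sqrt_le_mono, rule Top_sq_integral_lower_bound[OF that assms(3)[unfolded K_def \<eta>_def]])
qed

end

theorem corollary1:
  fixes c_f c_W C_F C_T w1 w2 x1 x2 xt1 xt2 :: real
  assumes "0 \<le> x1" "x1 < xt1" "xt1 < xt2" "xt2 < x2" "x2 \<le> 1"
    and "0 < w1" "w1 < w2" "w2 < 1"
    and "C_F > 1" "c_f > 0" "c_W > 0" "C_T \<ge> 0"
  shows "\<exists>c_tau C_tau. c_tau > 0 \<and> 0 < C_tau \<and>
    (\<forall>(f :: real \<Rightarrow> real \<Rightarrow> real) C_W.
      ((\<lambda>p. f (fst p) (snd p)) \<in> borel_measurable lborel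
      \<and> (\<forall>x\<in>{0..1}. \<forall>w\<in>{0..1}. 0 \<le> f x w)
      \<and> set_nn_integral lborel ({0..1}\<times>{0..1}) (\<lambda>p. ennreal (f (fst p) (snd p))) = 1
      \<and> (\<forall>x w' w''. x \<in> {0<..<1} \<and> w' \<in> {0<..<1} \<and> w'' \<in> {0<..<1} \<and> w' \<le> w''
            \<longrightarrow> condCDF f x w' \<ge> condCDF f x w'')
      \<and> (\<forall>x \<in> {0<..<x2}. condCDF f x w1 \<ge> C_F * condCDF f x w2)
      \<and> (\<forall>x \<in> {x1<..<1}. C_F * (1 - condCDF f x w1) \<le> 1 - condCDF f x w2)
      \<and> set_nn_integral lborel ({0..1}\<times>{0..1}) (\<lambda>p. ennreal ((f (fst p) (snd p))^2)) \<le> ennreal C_T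
      \<and> (\<forall>x \<in> {x1..x2}. \<forall>w \<in> {w1, w2}. condDens f x w \<ge> c_f)
      \<and> c_W \<le> C_W \<and> (\<forall>w \<in> {0..1}. c_W \<le> fW f w \<and> fW f w \<le> C_W))
      \<longrightarrow> (\<forall>a. a \<le> c_tau \<longrightarrow> tau xt1 xt2 f a \<le> ereal C_tau))"
proof -
  define K \<eta> where "K = (C_F - 1) * c_f * min (x2 - xt2) (xt1 - x1)" and "\<eta> = sqrt (1 / (xt2 - xt1))"
  define D where "D = c_W^2 * min w1 (1 - w2) * (K * \<eta> / (2 * C_F))^2 / 2"
  have pos: "0 < K" "0 < \<eta>" "0 < D" using assms by (simp_all add: K_def \<eta>_def D_def)
  have tau: "tau xt1 xt2 f a \<le> ereal (1 / sqrt D)"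
    if "monotone_iv f c_f c_W C_F w1 w2 x1 x2 xt1 xt2" "a \<le> K * \<eta> / (2 * (K + C_F))" for f a
    using monotone_iv.tau_le[OF that(1) that(2)[unfolded K_def \<eta>_def]] by (simp add: K_def \<eta>_def D_def)
  show ?thesis
    by (rule exI[of _ "K * \<eta> / (2 * (K + C_F))"], rule exI[of _ "1 / sqrt D"])
      (use pos assms in \<open>auto intro!: tau simp: monotone_iv_def, blast\<close>)
qed

end
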